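(* Let $\mathcal{V} = \{(x,y) \in \mathbb{C}^2 : e^{-x} + e^{-y} - 1 = 0\}$. If $(a,b) \in \mathcal{V} \cap (0,1)^2$, then $(a,b)$ is strictly minimal on $\mathcal{V}$, i.e. the closed bidisk $\{(z,w)\in\mathbb{C}^2 : |z|\le a,\ |w| \le b\}$ intersects $\mathcal{V}$ only at the point $(a,b)$. *)

theory Defs
  imports Complex_Main
begin

definition V :: "(complex \<times> complex) set" where
  "V = {(x, y). exp (- x) + exp (- y) - 1 = 0}"

end

theory Submission
  imports Defs "HOL-Analysis.Analysis"
begin

text \<open>
  On \<open>V\<close> the relation reads \<open>(exp x - 1)(exp y - 1) = 1\<close>. For complex \<open>z\<close> the power series
  gives \<open>\<bar>exp z - 1\<bar> \<le> exp \<bar>z\<bar> - 1\<close>, with equality only for real \<open>z \<ge> 0\<close>: comparing the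
  quadratic Taylor polynomials, equality forces \<open>\<bar>1 + z/2\<bar> = 1 + \<bar>z\<bar>/2\<close>. So if \<open>\<bar>z\<bar> \<le> a\<close>,
  \<open>\<bar>w\<bar> \<le> b\<close> and \<open>(z, w) \<in> V\<close>, then \<open>1 = \<bar>exp z - 1\<bar> \<bar>exp w - 1\<bar> \<le> (exp a - 1)(exp b - 1) = 1\<close>,
  so every inequality is an equality, which pins down \<open>z = a\<close> and \<open>w = b\<close>.
\<close>

lemma exp_minus_quadratic_sums:
  fixes z :: "'a::{real_normed_field,banach}"
  shows "(\<lambda>n. z^(n+3) / fact (n+3)) sums (exp z - (1 + z + z^2/2))"
proof -
  have "(\<lambda>n. z^n / fact n) sums exp z"
    using exp_converges[of z] by (simp add: scaleR_conv_of_real divide_inverse mult.commute)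
  then have "(\<lambda>n. z^(n+3) / fact (n+3)) sums (exp z - (\<Sum>i<3. z^i / fact i))"
    by (subst sums_iff_shift) simp
  moreover have "(\<Sum>i<3. z^i / fact i) = 1 + z + z^2/2"
    by (simp add: eval_nat_numeral fact_numeral)
  ultimately show ?thesis by simp
qed

lemma norm_exp_minus_quadratic_le:
  fixes z :: complex
  shows "cmod (exp z - (1 + z + z^2/2)) \<le> exp (cmod z) - (1 + cmod z + (cmod z)^2/2)"
proof (rule norm_sums_le[OF exp_minus_quadratic_sums exp_minus_quadratic_sums])
  fix n
  show "cmod (z ^ (n + 3) / fact (n + 3)) \<le> cmod z ^ (n + 3) / fact (n + 3)"
    by (simp add: norm_divide norm_power)
qed

lemma norm_exp_minus_one_le_quadratic:
  fixes z :: complex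
  shows "cmod (exp z - 1) \<le> cmod z * cmod (1 + z/2) + (exp (cmod z) - (1 + cmod z + (cmod z)^2/2))"
proof -
  have "exp z - 1 = z * (1 + z/2) + (exp z - (1 + z + z^2/2))"
    by (simp add: algebra_simps power2_eq_square)
  then have "cmod (exp z - 1) \<le> cmod (z * (1 + z/2)) + cmod (exp z - (1 + z + z^2/2))"
    by (metis norm_triangle_ineq)
  then show ?thesis
    using norm_exp_minus_quadratic_le[of z] by (simp add: norm_mult)
qed

lemma norm_one_plus_half_le:
  fixes z :: complex
  shows "cmod (1 + z/2) \<le> 1 + cmod z / 2"
  using norm_triangle_ineq[of 1 "z/2"] by (simp add: norm_divide)

lemma norm_exp_minus_one_le:
  fixes z :: complex
  shows "cmod (exp z - 1) \<le> exp (cmod z) - 1"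
proof -
  have "cmod z * cmod (1 + z/2) \<le> cmod z * (1 + cmod z / 2)"
    using norm_one_plus_half_le[of z] by (simp add: mult_left_mono)
  then show ?thesis
    using norm_exp_minus_one_le_quadratic[of z] by (simp add: algebra_simps power2_eq_square)
qed

lemma norm_exp_minus_one_eq_imp_nonneg_real:
  fixes z :: complex
  assumes "cmod (exp z - 1) = exp (cmod z) - 1"
  shows "z = of_real (cmod z)"
proof (cases "z = 0")
  case False
  have "cmod z * (1 + cmod z / 2) \<le> cmod z * cmod (1 + z/2)"
    using norm_exp_minus_one_le_quadratic[of z] assms
    by (simp add: algebra_simps power2_eq_square)
  then have "1 + cmod z / 2 \<le> cmod (1 + z/2)"
    using False by simp
  with norm_one_plus_half_le[of z] have "cmod (1 + z/2) = norm (1::complex) + cmod (z/2)"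
    by (simp add: norm_divide)
  then have "norm (1::complex) *\<^sub>R (z/2) = cmod (z/2) *\<^sub>R 1"
    using norm_triangle_eq by blast
  then show ?thesis
    by (simp add: norm_divide scaleR_conv_of_real)
qed simp

lemma V_iff_exp_product:
  fixes x y :: complex
  shows "(x, y) \<in> V \<longleftrightarrow> (exp x - 1) * (exp y - 1) = 1"
proof -
  have "exp x * exp y * (exp (- x) + exp (- y) - 1) = exp y + exp x - exp x * exp y"
    by (simp add: algebra_simps exp_minus_inverse)
  also have "\<dots> = 1 - (exp x - 1) * (exp y - 1)"
    by (simp add: algebra_simps)
  finally have "exp x * exp y * (exp (- x) + exp (- y) - 1) = 1 - (exp x - 1) * (exp y - 1)" .
  then show ?thesis
    by (auto simp: V_def)
qed

lemma V_of_real_iff: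
  fixes a b :: real
  shows "(complex_of_real a, complex_of_real b) \<in> V \<longleftrightarrow> (exp a - 1) * (exp b - 1) = 1"
proof -
  have "(exp (complex_of_real a) - 1) * (exp (complex_of_real b) - 1)
        = complex_of_real ((exp a - 1) * (exp b - 1))"
    by (simp add: exp_of_real)
  then show ?thesis
    by (metis V_iff_exp_product of_real_eq_1_iff)
qed

lemma exp_product_on_bidisk_imp_eq:
  fixes z w :: complex and a b :: real
  assumes "cmod z \<le> a" "cmod w \<le> b"
    and zw: "(exp z - 1) * (exp w - 1) = 1"
    and ab: "(exp a - 1) * (exp b - 1) = 1"
    and "0 < a"
  shows "z = of_real a"
proof -
  have z_le: "cmod (exp z - 1) \<le> exp a - 1" and w_le: "cmod (exp w - 1) \<le> exp b - 1"
    using norm_exp_minus_one_le[of z] norm_exp_minus_one_le[of w] assms(1,2)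
    by (meson diff_right_mono exp_le_cancel_iff order_trans)+
  have norms: "cmod (exp z - 1) * cmod (exp w - 1) = 1"
    using zw by (metis norm_mult norm_one)
  then have "cmod (exp w - 1) > 0"
    by (metis mult_zero_right norm_ge_zero order_le_less zero_neq_one)
  have z_eq: "cmod (exp z - 1) = exp a - 1"
  proof (rule ccontr)
    assume "cmod (exp z - 1) \<noteq> exp a - 1"
    with z_le \<open>cmod (exp w - 1) > 0\<close>
    have "cmod (exp z - 1) * cmod (exp w - 1) < (exp a - 1) * cmod (exp w - 1)"
      by simp
    also have "\<dots> \<le> (exp a - 1) * (exp b - 1)"
      using w_le \<open>0 < a\<close> by simp
    finally show False
      using norms ab by simp
  qed
  have "exp a - 1 \<le> exp (cmod z) - 1"
    using z_eq norm_exp_minus_one_le[of z] by simp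
  then have "cmod z = a"
    using assms(1) by simp
  with z_eq norm_exp_minus_one_eq_imp_nonneg_real[of z] show ?thesis
    by simp
qed

theorem lemma2p4:
  fixes a b :: real
  assumes "(complex_of_real a, complex_of_real b) \<in> V"
    and "0 < a" and "a < 1" and "0 < b" and "b < 1"
  shows "{(z, w). cmod z \<le> a \<and> cmod w \<le> b} \<inter> V = {(complex_of_real a, complex_of_real b)}"
proof -
  have ab: "(exp a - 1) * (exp b - 1) = 1"
    using assms(1) V_of_real_iff by blast
  have "z = of_real a \<and> w = of_real b"
    if "cmod z \<le> a" "cmod w \<le> b" "(z, w) \<in> V" for z w
    using that exp_product_on_bidisk_imp_eq[of z a w b] exp_product_on_bidisk_imp_eq[of w b z a]
      ab assms(2,4) by (simp add: V_iff_exp_product mult.commute)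
  then show ?thesis
    using assms by auto
qed

end
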